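(* Let $N>0$. (i) If $\tau\in(\tau_0^{(1)},\tau_1^{(1)})$, then $\beta_1^{**}(\tau)=\varphi_2^+(\beta_2^*(\tau))$, equivalently $\beta_2^*(\tau)=\varphi_1^+(\beta_1^{**}(\tau))$. In particular $$4(N+1)<\underline\beta_1(\tau)<\beta_1^{**}(\tau)<\overline\beta_1(\tau)\quad\text{and}\quad \underline\beta_2(\tau)<\beta_2^*(\tau)<\overline\beta_2(\tau).$$ (ii) If $\tau\in(\tau_0^{(2)},\tau_1^{(2)})$, then $\beta_2^{**}(\tau)=\varphi_1^+(\beta_1^*(\tau))$, equivalently $\beta_1^*(\tau)=\varphi_2^+(\beta_2^{**}(\tau))$. In particular $$4<\underline\beta_2(\tau)<\beta_2^{**}(\tau)<\overline\beta_2(\tau)\quad\text{and}\quad \underline\beta_1(\tau)<\beta_1^*(\tau)<\overline\beta_1(\tau).$$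
   Context: For $\tau\in(0,1)$, with $D=(N+1)^2+2\tau(N+1)+1$: $$\underline\beta_1(\tau)=\tfrac{2}{1-\tau^2}(N+1+\tau+\tau\sqrt D),\qquad \overline\beta_1(\tau)=\tfrac{2}{1-\tau^2}(N+1+\tau+\sqrt D),$$ $$\underline\beta_2(\tau)=\tfrac{2}{1-\tau^2}(1+\tau(N+1)+\tau\sqrt D),\qquad \overline\beta_2(\tau)=\tfrac{2}{1-\tau^2}(1+\tau(N+1)+\sqrt D);$$ $$\beta_1^*(\tau)=4(N+1)+8\tau,\quad \beta_2^*(\tau)=4+8\tau(N+1),\quad \beta_1^{**}(\tau)=8\tau(1+2\tau(N+1)),\quad \beta_2^{**}(\tau)=8\tau(N+1+2\tau);$$ $$\tau_0^{(1)}=\frac{N+1}{1+\sqrt{1+4(N+1)^2}},\qquad \tau_0^{(2)}=\frac{1}{N+1+\sqrt{(N+1)^2+4}};$$ $\tau_1^{(1)}$ is the unique positive zero of $2(1-2\tau^2)(1+2\tau(N+1))-1$ and $\tau_1^{(2)}$ the unique positive zero of $2(1-2\tau^2)(N+1+2\tau)-(N+1)$; $$\varphi_1^+(\beta_1)=2+\tau\beta_1+\sqrt{(2+\tau\beta_1)^2-\beta_1(\beta_1-4(N+1))}\ \ (0<\beta_1\le\overline\beta_1(\tau)),$$ $$\varphi_2^+(\beta_2)=2(N+1)+\tau\beta_2+\sqrt{(2(N+1)+\tau\beta_2)^2-\beta_2(\beta_2-4)}\ \ (0<\beta_2\le\overline\beta_2(\tau)).$$ *)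

theory Defs
  imports Complex_Main
begin

definition DD :: "real \<Rightarrow> real \<Rightarrow> real" where
  "DD N \<tau> = (N+1)^2 + 2*\<tau>*(N+1) + 1"

definition beta1_low :: "real \<Rightarrow> real \<Rightarrow> real" where
  "beta1_low N \<tau> = 2/(1-\<tau>^2) * (N+1+\<tau>+\<tau>*sqrt (DD N \<tau>))"
definition beta1_up :: "real \<Rightarrow> real \<Rightarrow> real" where
  "beta1_up N \<tau> = 2/(1-\<tau>^2) * (N+1+\<tau>+sqrt (DD N \<tau>))"
definition beta2_low :: "real \<Rightarrow> real \<Rightarrow> real" where
  "beta2_low N \<tau> = 2/(1-\<tau>^2) * (1+\<tau>*(N+1)+\<tau>*sqrt (DD N \<tau>))"
definition beta2_up :: "real \<Rightarrow> real \<Rightarrow> real" where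
  "beta2_up N \<tau> = 2/(1-\<tau>^2) * (1+\<tau>*(N+1)+sqrt (DD N \<tau>))"

definition beta1_star :: "real \<Rightarrow> real \<Rightarrow> real" where
  "beta1_star N \<tau> = 4*(N+1) + 8*\<tau>"
definition beta2_star :: "real \<Rightarrow> real \<Rightarrow> real" where
  "beta2_star N \<tau> = 4 + 8*\<tau>*(N+1)"
definition beta1_sstar :: "real \<Rightarrow> real \<Rightarrow> real" where
  "beta1_sstar N \<tau> = 8*\<tau>*(1+2*\<tau>*(N+1))"
definition beta2_sstar :: "real \<Rightarrow> real \<Rightarrow> real" where
  "beta2_sstar N \<tau> = 8*\<tau>*(N+1+2*\<tau>)"

definition tau0_1 :: "real \<Rightarrow> real" where
  "tau0_1 N = (N+1) / (1 + sqrt (1 + 4*(N+1)^2))"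
definition tau0_2 :: "real \<Rightarrow> real" where
  "tau0_2 N = 1 / (N+1 + sqrt ((N+1)^2 + 4))"

(* unique positive zeros *)
definition tau1_1 :: "real \<Rightarrow> real" where
  "tau1_1 N = (THE \<tau>. \<tau> > 0 \<and> 2*(1-2*\<tau>^2)*(1+2*\<tau>*(N+1)) - 1 = 0)"
definition tau1_2 :: "real \<Rightarrow> real" where
  "tau1_2 N = (THE \<tau>. \<tau> > 0 \<and> 2*(1-2*\<tau>^2)*(N+1+2*\<tau>) - (N+1) = 0)"

(* phi_i^+, meaningful for 0 < beta_i <= beta_i_up N tau (domain stated separately) *)
definition phi1_plus :: "real \<Rightarrow> real \<Rightarrow> real \<Rightarrow> real" where
  "phi1_plus N \<tau> b = 2 + \<tau>*b + sqrt ((2+\<tau>*b)^2 - b*(b - 4*(N+1)))"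
definition phi2_plus :: "real \<Rightarrow> real \<Rightarrow> real \<Rightarrow> real" where
  "phi2_plus N \<tau> b = 2*(N+1) + \<tau>*b + sqrt ((2*(N+1)+\<tau>*b)^2 - b*(b - 4))"

end

theory Submission
  imports Defs
begin

text \<open>
  Write \<open>M = N + 1\<close>. For \<open>\<tau> > 0\<close>, the condition \<open>tau0_1 N < \<tau>\<close> says that
  \<open>f = 4M\<tau>\<^sup>2 + 2\<tau> - M\<close> is positive, and \<open>\<tau> < tau1_1 N\<close> says that
  \<open>g = 2(1 - 2\<tau>\<^sup>2)(1 + 2M\<tau>) - 1\<close> is positive: \<open>g(x) - g(r)\<close> is \<open>r - x\<close> times a factor
  increasing in \<open>x\<close>, so \<open>g\<close> stays positive up to its only positive root.
  The radicands of \<open>\<phi>\<^sub>2\<^sup>+(\<beta>\<^sub>2\<^sup>*)\<close> and \<open>\<phi>\<^sub>1\<^sup>+(\<beta>\<^sub>1\<^sup>*\<^sup>*)\<close> are exactly \<open>(2f)\<^sup>2\<close> and \<open>(2g)\<^sup>2\<close>,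
  which gives the two identities. Every remaining inequality compares some \<open>\<beta>\<close> with
  \<open>2/(1 - \<tau>\<^sup>2) (a + b \<surd>D)\<close>; after clearing the denominator and squaring, the difference of
  the two sides factors into \<open>f\<close>, \<open>g\<close>, \<open>1 - \<tau>\<^sup>2\<close> and manifestly positive terms.

  Part (ii) needs no computation of its own: with \<open>1/M\<close> in place of \<open>M\<close>, every quantity of
  part (i) is the corresponding quantity of part (ii) divided by \<open>M\<close>, and \<open>tau0_1\<close>, \<open>tau1_1\<close>
  become \<open>tau0_2\<close>, \<open>tau1_2\<close>.
\<close>

definition tau0_poly :: "real \<Rightarrow> real \<Rightarrow> real" where
  "tau0_poly n t = 4*(n+1)*t^2 + 2*t - (n+1)"

definition tau1_poly :: "real \<Rightarrow> real \<Rightarrow> real" where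
  "tau1_poly n t = 2*(1-2*t^2)*(1+2*t*(n+1)) - 1"

lemma less_mult_sqrt:
  fixes a b D :: real
  assumes "0 \<le> b" "a^2 < b^2 * D"
  shows "a < b * sqrt D"
proof -
  have "a < sqrt (b^2 * D)" using assms(2) by (rule real_less_rsqrt)
  also have "\<dots> = b * sqrt D" using assms(1) by (simp add: real_sqrt_mult)
  finally show ?thesis .
qed

lemma mult_sqrt_less:
  fixes a b D :: real
  assumes "0 \<le> a" "0 \<le> b" "b^2 * D < a^2"
  shows "b * sqrt D < a"
proof -
  have "b * sqrt D = sqrt (b^2 * D)" using assms(2) by (simp add: real_sqrt_mult)
  also have "\<dots> < a" using assms(1,3) by (rule real_less_lsqrt)
  finally show ?thesis .
qed

lemma tau0_poly_pos:
  assumes "0 < n + 1" "tau0_1 n < t"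
  shows "0 < t" "0 < tau0_poly n t"
proof -
  define M where "M = n + 1"
  define r where "r = sqrt (1 + 4*M^2)"
  define z where "z = M / (1 + r)"
  have M: "0 < M" and poly: "\<And>x. tau0_poly n x = 4*M*x^2 + 2*x - M"
    using assms(1) by (simp_all add: M_def tau0_poly_def)
  have r: "r^2 = 1 + 4*M^2" "0 < 1 + r"
    unfolding r_def by (simp_all add: add_pos_nonneg)
  have "(r - 1) * (1 + r) = 4*M^2" using r(1) by (simp add: algebra_simps power2_eq_square)
  then have z_eq: "z = (r - 1) / (4*M)"
    unfolding z_def using M r(2) by (simp add: field_simps power2_eq_square)
  have "tau0_poly n z = (r^2 - 1 - 4*M^2) / (4*M)"
    unfolding poly z_eq using M by (simp add: field_simps power2_eq_square)
  then have root: "tau0_poly n z = 0" using r(1) by simp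
  have z: "0 < z" unfolding z_def using M r(2) by simp
  have "z < t" using assms(2) unfolding tau0_1_def z_def r_def M_def .
  then show "0 < t" using z by simp
  have "tau0_poly n t - tau0_poly n z = (t - z) * (4*M*(t+z) + 2)"
    unfolding poly by (simp add: algebra_simps power2_eq_square)
  moreover have "0 < (t - z) * (4*M*(t+z) + 2)"
    using \<open>z < t\<close> z M by (simp add: add_pos_pos)
  ultimately show "0 < tau0_poly n t" using root by simp
qed

lemma tau1_poly_diff:
  "tau1_poly n x - tau1_poly n y = (y - x) * (4*(x+y) + 8*(n+1)*(x^2 + x*y + y^2) - 4*(n+1))"
  by (simp add: tau1_poly_def algebra_simps power2_eq_square power3_eq_cube)

lemma tau1_poly_pos_below_root:
  assumes "0 \<le> n + 1" "0 < r" "tau1_poly n r = 0" "0 \<le> x" "x < r"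
  shows "0 < tau1_poly n x"
proof -
  have "1 = r * (4*r + 8*(n+1)*r^2 - 4*(n+1))"
    using tau1_poly_diff[of n 0 r] assms(3) by (simp add: tau1_poly_def)
  then have "0 < 4*r + 8*(n+1)*r^2 - 4*(n+1)"
    using assms(2) by (metis zero_less_mult_pos zero_less_one)
  moreover have "4*r + 8*(n+1)*r^2 \<le> 4*(x+r) + 8*(n+1)*(x^2 + x*r + r^2)"
  proof -
    have "0 \<le> 4*x + 8*(n+1)*(x^2 + x*r)" using assms by simp
    then show ?thesis by (simp add: algebra_simps)
  qed
  ultimately have "0 < (r - x) * (4*(x+r) + 8*(n+1)*(x^2 + x*r + r^2) - 4*(n+1))"
    using assms(5) by simp
  then show ?thesis using tau1_poly_diff[of n x r] assms(3) by simp
qed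

lemma tau1_1_root:
  assumes "0 < n + 1"
  shows "0 < tau1_1 n" "tau1_poly n (tau1_1 n) = 0"
proof -
  have "continuous_on {0..1} (tau1_poly n)"
    unfolding tau1_poly_def by (intro continuous_intros)
  moreover have "tau1_poly n 1 \<le> 0" "0 \<le> tau1_poly n 0"
    using assms by (simp_all add: tau1_poly_def)
  ultimately obtain r where "0 \<le> r" "tau1_poly n r = 0"
    using IVT2'[of "tau1_poly n" 1 0 0] by auto
  moreover have "r \<noteq> 0" using \<open>tau1_poly n r = 0\<close> by (auto simp: tau1_poly_def)
  ultimately have r: "0 < r \<and> tau1_poly n r = 0" by simp
  have "\<exists>!r. 0 < r \<and> tau1_poly n r = 0"
  proof (rule ex1I[of _ r])
    fix s assume "0 < s \<and> tau1_poly n s = 0"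
    then show "s = r"
      using tau1_poly_pos_below_root[of n r s] tau1_poly_pos_below_root[of n s r] r assms
      by (cases s r rule: linorder_cases) auto
  qed (rule r)
  then have "0 < tau1_1 n \<and> tau1_poly n (tau1_1 n) = 0"
    unfolding tau1_1_def tau1_poly_def by (rule theI')
  then show "0 < tau1_1 n" "tau1_poly n (tau1_1 n) = 0" by simp_all
qed

lemma tau1_poly_pos:
  assumes "0 < n + 1" "0 \<le> t" "t < tau1_1 n"
  shows "0 < tau1_poly n t"
  using tau1_poly_pos_below_root[of n "tau1_1 n" t] tau1_1_root[OF assms(1)] assms by simp

lemma square_less_half_if_tau1_poly_pos:
  assumes "0 < n + 1" "0 < t" "0 < tau1_poly n t"
  shows "2*t^2 < 1"
proof (rule ccontr)
  assume "\<not> 2*t^2 < 1"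
  then have "(1 - 2*t^2) * (1 + 2*t*(n+1)) \<le> 0"
    using assms by (intro mult_nonpos_nonneg) auto
  moreover have "tau1_poly n t = 2 * ((1 - 2*t^2) * (1 + 2*t*(n+1))) - 1"
    by (simp add: tau1_poly_def)
  ultimately show False using assms(3) by linarith
qed

lemma phi2_plus_beta2_star:
  assumes "0 \<le> tau0_poly n t"
  shows "phi2_plus n t (beta2_star n t) = beta1_sstar n t"
proof -
  have "(2*(n+1) + t * beta2_star n t)^2 - beta2_star n t * (beta2_star n t - 4)
        = (2 * tau0_poly n t)^2"
    by (simp add: beta2_star_def tau0_poly_def algebra_simps power2_eq_square)
  then have "sqrt ((2*(n+1) + t * beta2_star n t)^2 - beta2_star n t * (beta2_star n t - 4))
        = 2 * tau0_poly n t"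
    using assms by (intro real_sqrt_unique) simp_all
  then show ?thesis
    by (simp add: phi2_plus_def beta2_star_def beta1_sstar_def tau0_poly_def algebra_simps
        power2_eq_square)
qed

lemma phi1_plus_beta1_sstar:
  assumes "0 \<le> tau1_poly n t"
  shows "phi1_plus n t (beta1_sstar n t) = beta2_star n t"
proof -
  have "(2 + t * beta1_sstar n t)^2 - beta1_sstar n t * (beta1_sstar n t - 4*(n+1))
        = (2 * tau1_poly n t)^2"
    by (simp add: beta1_sstar_def tau1_poly_def algebra_simps power2_eq_square)
  then have "sqrt ((2 + t * beta1_sstar n t)^2 - beta1_sstar n t * (beta1_sstar n t - 4*(n+1)))
        = 2 * tau1_poly n t"
    using assms by (intro real_sqrt_unique) simp_all
  then show ?thesis
    by (simp add: phi1_plus_def beta2_star_def beta1_sstar_def tau1_poly_def algebra_simps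
        power2_eq_square)
qed

lemma four_n_plus_four_less_beta1_low:
  assumes "0 < n + 1" "0 < t" "2*t^2 < 1" "0 < tau0_poly n t"
  shows "4*(n+1) < beta1_low n t"
proof -
  have k: "0 < 1 - t^2" using assms(3) by simp
  have "t^2 * DD n t - (2*(n+1)*(1-t^2) - (n+1) - t)^2 = (n+1) * tau0_poly n t * (1-t^2)"
    by (simp add: DD_def tau0_poly_def algebra_simps power2_eq_square)
  moreover have "0 < (n+1) * tau0_poly n t * (1-t^2)" using assms k by simp
  ultimately have "2*(n+1)*(1-t^2) - (n+1) - t < t * sqrt (DD n t)"
    using assms(2) by (intro less_mult_sqrt) auto
  then show ?thesis using k by (simp add: beta1_low_def field_simps)
qed

lemma beta1_low_less_beta1_sstar:
  assumes "0 < n + 1" "0 < t" "2*t^2 < 1" "0 < tau0_poly n t"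
  shows "beta1_low n t < beta1_sstar n t"
proof -
  have k: "0 < 1 - t^2" using assms(3) by simp
  define gap where "gap = beta1_sstar n t * (1-t^2)/2 - (n+1) - t"
  have "2*gap = (3 - 4*t^2) * tau0_poly n t + (n+1)"
    by (simp add: gap_def beta1_sstar_def tau0_poly_def field_simps power2_eq_square)
  moreover have "0 < (3 - 4*t^2) * tau0_poly n t" using assms by simp
  ultimately have gap: "0 < gap" using assms(1) by linarith
  have "0 < 2*(1-2*t^2)*tau0_poly n t + (n+1)"
    using assms by (simp add: add_pos_pos)
  then have "0 < tau0_poly n t * (1-t^2) * (2*(1-2*t^2)*tau0_poly n t + (n+1))"
    using assms k by simp
  moreover have "gap^2 - t^2 * DD n t = tau0_poly n t * (1-t^2) * (2*(1-2*t^2)*tau0_poly n t + (n+1))"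
    by (simp add: gap_def DD_def beta1_sstar_def tau0_poly_def field_simps power2_eq_square)
  ultimately have "t * sqrt (DD n t) < gap" using gap assms(2) by (intro mult_sqrt_less) auto
  then show ?thesis using k by (simp add: gap_def beta1_low_def field_simps)
qed

lemma beta1_sstar_less_beta1_up:
  assumes "2*t^2 < 1" "tau1_poly n t \<noteq> 0"
  shows "beta1_sstar n t < beta1_up n t"
proof -
  have k: "0 < 1 - t^2" using assms(1) by simp
  have "DD n t - (beta1_sstar n t * (1-t^2)/2 - (n+1) - t)^2 = (1-t^2) * (tau1_poly n t)^2"
    by (simp add: DD_def beta1_sstar_def tau1_poly_def field_simps power2_eq_square)
  moreover have "0 < (1-t^2) * (tau1_poly n t)^2" using assms k by simp
  ultimately have "beta1_sstar n t * (1-t^2)/2 - (n+1) - t < sqrt (DD n t)"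
    by (intro real_less_rsqrt) linarith
  then show ?thesis using k by (simp add: beta1_up_def field_simps)
qed

lemma beta2_low_less_beta2_star:
  assumes "0 < n + 1" "0 < t" "2*t^2 < 1" "0 < tau1_poly n t"
  shows "beta2_low n t < beta2_star n t"
proof -
  have k: "0 < 1 - t^2" using assms(3) by simp
  define gap where "gap = beta2_star n t * (1-t^2)/2 - 1 - t*(n+1)"
  have "gap = (1 - 2*t^2) + (n+1)*t*(3 - 4*t^2)"
    by (simp add: gap_def beta2_star_def field_simps power2_eq_square)
  moreover have "0 < (n+1) * t * (3 - 4*t^2)" using assms by simp
  ultimately have gap: "0 < gap" using assms(3) by linarith
  have "gap^2 - t^2 * DD n t = tau1_poly n t * (1-t^2) * (1 + 2*(n+1)*t)"
    by (simp add: gap_def DD_def beta2_star_def tau1_poly_def field_simps power2_eq_square)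
  moreover have "0 < tau1_poly n t * (1-t^2) * (1 + 2*(n+1)*t)"
    using assms k by (simp add: add_pos_pos)
  ultimately have "t * sqrt (DD n t) < gap" using gap assms(2) by (intro mult_sqrt_less) auto
  then show ?thesis using k by (simp add: gap_def beta2_low_def field_simps)
qed

lemma beta2_star_less_beta2_up:
  assumes "2*t^2 < 1" "tau0_poly n t \<noteq> 0"
  shows "beta2_star n t < beta2_up n t"
proof -
  have k: "0 < 1 - t^2" using assms(1) by simp
  have "DD n t - (beta2_star n t * (1-t^2)/2 - 1 - t*(n+1))^2 = (1-t^2) * (tau0_poly n t)^2"
    by (simp add: DD_def beta2_star_def tau0_poly_def field_simps power2_eq_square)
  moreover have "0 < (1-t^2) * (tau0_poly n t)^2" using assms k by simp
  ultimately have "beta2_star n t * (1-t^2)/2 - 1 - t*(n+1) < sqrt (DD n t)"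
    by (intro real_less_rsqrt) linarith
  then show ?thesis using k by (simp add: beta2_up_def field_simps)
qed

lemma first_interval_bounds:
  assumes "0 < n + 1" "tau0_1 n < t" "t < tau1_1 n"
  shows
   "(0 < beta2_star n t \<and> beta2_star n t \<le> beta2_up n t \<and>
       beta1_sstar n t = phi2_plus n t (beta2_star n t)) \<and>
    (0 < beta1_sstar n t \<and> beta1_sstar n t \<le> beta1_up n t \<and>
       beta2_star n t = phi1_plus n t (beta1_sstar n t)) \<and>
    4*(n+1) < beta1_low n t \<and>
    beta1_low n t < beta1_sstar n t \<and>
    beta1_sstar n t < beta1_up n t \<and>
    beta2_low n t < beta2_star n t \<and>
    beta2_star n t < beta2_up n t"
proof -
  have t: "0 < t" and f: "0 < tau0_poly n t" using tau0_poly_pos assms by auto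
  have g: "0 < tau1_poly n t" using tau1_poly_pos assms t by simp
  have sq: "2*t^2 < 1" using square_less_half_if_tau1_poly_pos assms(1) t g .
  have "tau0_poly n t \<noteq> 0" "tau1_poly n t \<noteq> 0" using f g by simp_all
  have "0 < beta2_star n t" "0 < beta1_sstar n t"
    using assms(1) t by (simp_all add: beta2_star_def beta1_sstar_def add_pos_pos)
  moreover note
    phi2_plus_beta2_star[OF less_imp_le[OF f]] phi1_plus_beta1_sstar[OF less_imp_le[OF g]]
    four_n_plus_four_less_beta1_low[OF assms(1) t sq f] beta1_low_less_beta1_sstar[OF assms(1) t sq f]
    beta1_sstar_less_beta1_up[OF sq \<open>tau1_poly n t \<noteq> 0\<close>]
    beta2_low_less_beta2_star[OF assms(1) t sq g]
    beta2_star_less_beta2_up[OF sq \<open>tau0_poly n t \<noteq> 0\<close>]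
  ultimately show ?thesis by auto
qed

lemma sqrt_DD_reciprocal:
  assumes "0 < M"
  shows "sqrt (DD (1/M - 1) t) = sqrt (DD (M - 1) t) / M"
proof -
  have "DD (1/M - 1) t = DD (M - 1) t / M^2"
    using assms by (simp add: DD_def field_simps power2_eq_square)
  then show ?thesis using assms by (simp add: real_sqrt_divide)
qed

lemma beta_reciprocal:
  assumes "0 < M"
  shows "beta1_low (1/M - 1) t = beta2_low (M - 1) t / M"
    and "beta1_up (1/M - 1) t = beta2_up (M - 1) t / M"
    and "beta2_low (1/M - 1) t = beta1_low (M - 1) t / M"
    and "beta2_up (1/M - 1) t = beta1_up (M - 1) t / M"
    and "beta2_star (1/M - 1) t = beta1_star (M - 1) t / M"
    and "beta1_sstar (1/M - 1) t = beta2_sstar (M - 1) t / M"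
  unfolding beta1_low_def beta1_up_def beta2_low_def beta2_up_def beta1_star_def beta2_star_def
    beta1_sstar_def beta2_sstar_def sqrt_DD_reciprocal[OF assms]
  using assms by (cases "t^2 = 1"; simp add: field_simps)+

lemma phi_reciprocal:
  assumes "0 < M"
  shows "phi2_plus (1/M - 1) t (b / M) = phi1_plus (M - 1) t b / M"
    and "phi1_plus (1/M - 1) t (b / M) = phi2_plus (M - 1) t b / M"
proof -
  have rad2: "(2*(1/M - 1 + 1) + t * (b / M))^2 - b / M * (b / M - 4)
      = ((2 + t*b)^2 - b * (b - 4*M)) / M^2"
    using assms by (simp add: field_simps power2_eq_square)
  show "phi2_plus (1/M - 1) t (b / M) = phi1_plus (M - 1) t b / M"
    unfolding phi1_plus_def phi2_plus_def rad2 real_sqrt_divide real_sqrt_abs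
    using assms by (simp add: field_simps)
  have rad1: "(2 + t * (b / M))^2 - b / M * (b / M - 4*(1/M - 1 + 1))
      = ((2*M + t*b)^2 - b * (b - 4)) / M^2"
    using assms by (simp add: field_simps power2_eq_square)
  show "phi1_plus (1/M - 1) t (b / M) = phi2_plus (M - 1) t b / M"
    unfolding phi1_plus_def phi2_plus_def rad1 real_sqrt_divide real_sqrt_abs
    using assms by (simp add: field_simps)
qed

lemma tau0_1_reciprocal:
  assumes "0 < M"
  shows "tau0_1 (1/M - 1) = tau0_2 (M - 1)"
proof -
  have "1 + 4 * (1/M)^2 = (M^2 + 4) / M^2"
    using assms by (simp add: field_simps power2_eq_square)
  then have "sqrt (1 + 4 * (1/M)^2) = sqrt (M^2 + 4) / M"
    using assms by (simp add: real_sqrt_divide)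
  then show ?thesis
    using assms by (simp add: tau0_1_def tau0_2_def field_simps)
qed

lemma tau1_1_reciprocal:
  assumes "0 < M"
  shows "tau1_1 (1/M - 1) = tau1_2 (M - 1)"
proof -
  have "2*(1-2*t^2)*(1+2*t*(1/M)) - 1 = (2*(1-2*t^2)*(M+2*t) - M) / M" for t
    using assms by (simp add: field_simps)
  then show ?thesis using assms by (simp add: tau1_1_def tau1_2_def)
qed

lemma second_interval_bounds:
  assumes "0 < n + 1" "tau0_2 n < t" "t < tau1_2 n"
  shows
   "(0 < beta1_star n t \<and> beta1_star n t \<le> beta1_up n t \<and>
       beta2_sstar n t = phi1_plus n t (beta1_star n t)) \<and>
    (0 < beta2_sstar n t \<and> beta2_sstar n t \<le> beta2_up n t \<and>
       beta1_star n t = phi2_plus n t (beta2_sstar n t)) \<and>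
    4 < beta2_low n t \<and>
    beta2_low n t < beta2_sstar n t \<and>
    beta2_sstar n t < beta2_up n t \<and>
    beta1_low n t < beta1_star n t \<and>
    beta1_star n t < beta1_up n t"
proof -
  define M where "M = n + 1"
  have M: "0 < M" and n: "n = M - 1" using assms(1) by (simp_all add: M_def)
  have reciprocal_hyps: "0 < 1/M - 1 + 1" "tau0_1 (1/M - 1) < t" "t < tau1_1 (1/M - 1)"
    using M assms(2,3) by (simp_all add: n tau0_1_reciprocal tau1_1_reciprocal)
  have scale: "\<And>a b. a/M < b/M \<longleftrightarrow> a < b" "\<And>a b. a/M \<le> b/M \<longleftrightarrow> a \<le> b"
      "\<And>a b. a/M = b/M \<longleftrightarrow> a = b" "\<And>a. 0 < a/M \<longleftrightarrow> 0 < a" "4*(1/M - 1 + 1) = 4/M"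
    using M by (simp_all add: divide_less_cancel divide_le_cancel zero_less_divide_iff)
  show ?thesis
    using first_interval_bounds[OF reciprocal_hyps,
        unfolded beta_reciprocal[OF M] phi_reciprocal[OF M] scale]
    unfolding n .
qed

theorem mainTheorem16:
  fixes N :: nat
  assumes "N > 0"
  shows
   "(\<forall>\<tau>::real. tau0_1 (real N) < \<tau> \<and> \<tau> < tau1_1 (real N) \<longrightarrow>
      (0 < beta2_star (real N) \<tau> \<and> beta2_star (real N) \<tau> \<le> beta2_up (real N) \<tau> \<and>
       beta1_sstar (real N) \<tau> = phi2_plus (real N) \<tau> (beta2_star (real N) \<tau>)) \<and>
      (0 < beta1_sstar (real N) \<tau> \<and> beta1_sstar (real N) \<tau> \<le> beta1_up (real N) \<tau> \<and>
       beta2_star (real N) \<tau> = phi1_plus (real N) \<tau> (beta1_sstar (real N) \<tau>)) \<and>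
      4*(real N+1) < beta1_low (real N) \<tau> \<and>
      beta1_low (real N) \<tau> < beta1_sstar (real N) \<tau> \<and>
      beta1_sstar (real N) \<tau> < beta1_up (real N) \<tau> \<and>
      beta2_low (real N) \<tau> < beta2_star (real N) \<tau> \<and>
      beta2_star (real N) \<tau> < beta2_up (real N) \<tau>)
  \<and>
   (\<forall>\<tau>::real. tau0_2 (real N) < \<tau> \<and> \<tau> < tau1_2 (real N) \<longrightarrow>
      (0 < beta1_star (real N) \<tau> \<and> beta1_star (real N) \<tau> \<le> beta1_up (real N) \<tau> \<and>
       beta2_sstar (real N) \<tau> = phi1_plus (real N) \<tau> (beta1_star (real N) \<tau>)) \<and>
      (0 < beta2_sstar (real N) \<tau> \<and> beta2_sstar (real N) \<tau> \<le> beta2_up (real N) \<tau> \<and>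
       beta1_star (real N) \<tau> = phi2_plus (real N) \<tau> (beta2_sstar (real N) \<tau>)) \<and>
      4 < beta2_low (real N) \<tau> \<and>
      beta2_low (real N) \<tau> < beta2_sstar (real N) \<tau> \<and>
      beta2_sstar (real N) \<tau> < beta2_up (real N) \<tau> \<and>
      beta1_low (real N) \<tau> < beta1_star (real N) \<tau> \<and>
      beta1_star (real N) \<tau> < beta1_up (real N) \<tau>)"
proof -
  have "0 < real N + 1" by simp
  then show ?thesis
    using first_interval_bounds[of "real N"] second_interval_bounds[of "real N"] by blast
qed

end
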